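(* Let $\kappa$ be a regular infinite cardinal and $\mu$ a singular cardinal with $\mathrm{cf}(\mu)=\kappa$. Then $w({}^{\kappa}\mu,\mathrm{bd})=\mu^{<\kappa}$, $w({}^{\mu}2,\mathrm{bd})=w({}^{\mu}\kappa,\mathrm{bd})=2^{<\mu}$, and $w({}^{\mu}\mu,\mathrm{bd})=\mu^{<\mu}$. Furthermore, for each $X\in\{{}^{\kappa}\mu,{}^{\mu}2,{}^{\mu}\kappa,{}^{\mu}\mu\}$, the space $(X,\mathrm{bd})$ has an open partition of cardinality $w(X,\mathrm{bd})$.
   Context: For ordinals $\delta,\rho$, ${}^{\delta}\rho$ is the set of functions $\delta\to\rho$; for a partial function $s\colon\delta\rightharpoonup\rho$, $[s]=\{f\in{}^{\delta}\rho: s\subseteq f\}$. The bounded topology on ${}^{\delta}\rho$ has base $\{[s]: s\in{}^{\alpha}\rho,\ \alpha<\delta\}$; $(X,\mathrm{bd})$ denotes $X$ with this topology. $w(X,\tau)$ is the weight (least size of a base). An open partition of a space is a family of pairwise disjoint nonempty open sets whose union is the whole space. *)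

theory Defs
  imports "HOL-Analysis.Analysis"
begin

unbundle cardinal_syntax

text \<open>Ordinals are represented by well-orders (here: cardinal orders) r; the ordinals
  below the ordinal of r are the elements alpha of Field r, and the ordinal alpha itself is
  represented by its initial segment underS r alpha.  The space of functions delta -> rho is
  the set of extensional functions Field r -> R.\<close>

definition fun_space :: "'a rel \<Rightarrow> 'b set \<Rightarrow> ('a \<Rightarrow> 'b) set" where
  "fun_space r R = (Field r \<rightarrow>\<^sub>E R)"

definition bd_basic :: "'a rel \<Rightarrow> 'b set \<Rightarrow> 'a \<Rightarrow> ('a \<Rightarrow> 'b) \<Rightarrow> ('a \<Rightarrow> 'b) set" where
  "bd_basic r R \<alpha> s = {f \<in> fun_space r R. \<forall>\<beta> \<in> underS r \<alpha>. f \<beta> = s \<beta>}"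

definition bd_base :: "'a rel \<Rightarrow> 'b set \<Rightarrow> ('a \<Rightarrow> 'b) set set" where
  "bd_base r R = {bd_basic r R \<alpha> s | \<alpha> s. \<alpha> \<in> Field r \<and> s \<in> (underS r \<alpha> \<rightarrow>\<^sub>E R)}"

definition bd_top :: "'a rel \<Rightarrow> 'b set \<Rightarrow> ('a \<Rightarrow> 'b) topology" where
  "bd_top r R = topology_generated_by (bd_base r R)"

definition is_base :: "'x topology \<Rightarrow> 'x set set \<Rightarrow> bool" where
  "is_base T B \<longleftrightarrow> (\<forall>U\<in>B. openin T U) \<and>
     (\<forall>U. openin T U \<longrightarrow> (\<exists>C \<subseteq> B. \<Union>C = U))"

definition is_weight :: "'x topology \<Rightarrow> 'y set \<Rightarrow> bool" where
  "is_weight T L \<longleftrightarrow> (\<exists>B. is_base T B \<and> |B| =o |L| ) \<and>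
     (\<forall>B. is_base T B \<longrightarrow> |L| \<le>o |B| )"

definition is_card_sup :: "'i set \<Rightarrow> ('i \<Rightarrow> 'x set) \<Rightarrow> 'y set \<Rightarrow> bool" where
  "is_card_sup I A L \<longleftrightarrow> (\<forall>i\<in>I. |A i| \<le>o |L| ) \<and>
     (\<forall>C :: 'x set. (\<forall>i\<in>I. |A i| \<le>o |C| ) \<longrightarrow> |L| \<le>o |C| )"

text \<open>|L| = rho^{<delta} = sup of |rho^alpha| over ordinals alpha < delta.\<close>
definition is_cexp_less :: "'b set \<Rightarrow> 'a rel \<Rightarrow> 'y set \<Rightarrow> bool" where
  "is_cexp_less R r L \<longleftrightarrow> is_card_sup (Field r) (\<lambda>\<alpha>. underS r \<alpha> \<rightarrow>\<^sub>E R) L"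

definition open_partition :: "'x topology \<Rightarrow> 'x set set \<Rightarrow> bool" where
  "open_partition T P \<longleftrightarrow> (\<forall>U\<in>P. openin T U \<and> U \<noteq> {}) \<and>
     (\<forall>U\<in>P. \<forall>V\<in>P. U \<noteq> V \<longrightarrow> U \<inter> V = {}) \<and> \<Union>P = topspace T"

definition cof_is :: "'b rel \<Rightarrow> 'a rel \<Rightarrow> bool" where
  "cof_is m k \<longleftrightarrow> (\<exists>K \<subseteq> Field m. cofinal K m \<and> |K| =o k) \<and>
     (\<forall>K \<subseteq> Field m. cofinal K m \<longrightarrow> k \<le>o |K| )"

definition weight_cexp_partition :: "'x topology \<Rightarrow> 'b set \<Rightarrow> 'a rel \<Rightarrow> bool" where
  "weight_cexp_partition T R r \<longleftrightarrow>
     (\<exists>L :: 'x set set. is_weight T L \<and> is_cexp_less R r L \<and>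
        (\<exists>P. open_partition T P \<and> |P| =o |L| ))"

end

(*
  The basic sets [s], s : alpha -> rho with alpha < delta, form a base of the bounded topology
  on ^delta rho with rho^{<delta} members (delta <= rho^{<delta} by Cantor's theorem).  Two
  basic sets are nested or disjoint, and an open partition injects into every base, so the
  weight is rho^{<delta} as soon as some open partition has at least |^alpha rho| pieces for
  every alpha < delta.

  Such a partition exists if delta has a cofinal subset K of size at most rho^{|gamma|} for
  some gamma < delta: code the elements i > gamma of K injectively by functions
  t_i : gamma -> rho, and cut each f at level i if f|gamma = t_i, at level gamma otherwise.
  The sets [f|level(f)] partition the space, and above a large enough i there is room beyond
  gamma to encode an arbitrary u : alpha -> rho.  For ^kappa mu and ^mu mu one takes K = delta;
  for ^mu 2 and ^mu kappa a cofinal subset of mu of size kappa < mu, which exists as mu is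
  singular.  Finally kappa^{<mu} = 2^{<mu}, since kappa^alpha <= 2^(kappa * alpha) and
  kappa * alpha < mu.
*)
theory Submission
  imports Defs
begin

section \<open>Cardinalities of function spaces\<close>

lemma card_of_PiE_eq_cexp: "|A \<rightarrow>\<^sub>E B| = |B| ^c |A|"
proof -
  have "A \<rightarrow>\<^sub>E B = Func A B" by (auto simp: Func_def PiE_def extensional_def)
  then show ?thesis by (simp add: cexp_def Field_card_of)
qed

lemma ctwo_ordLeq_imp_nonempty: "ctwo \<le>o |R| \<Longrightarrow> R \<noteq> {}"
  unfolding ctwo_def card_of_ordLeq[symmetric] by auto

lemma card_of_ordLess_PiE:
  assumes "ctwo \<le>o |R|"
  shows "|A| <o |A \<rightarrow>\<^sub>E R|"
proof -
  have "|A| <o ctwo ^c |A|" by (rule ordLess_ctwo_cexp[OF card_of_Card_order])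
  also have "ctwo ^c |A| \<le>o |R| ^c |A|" by (rule cexp_mono1[OF assms card_of_Card_order])
  finally show ?thesis by (simp add: card_of_PiE_eq_cexp)
qed

lemma card_of_PiE_bool_ordLeq:
  assumes "ctwo \<le>o |R|"
  shows "|A \<rightarrow>\<^sub>E (UNIV :: bool set)| \<le>o |A \<rightarrow>\<^sub>E R|"
  using cexp_mono1[OF assms card_of_Card_order] by (simp add: card_of_PiE_eq_cexp ctwo_def)

lemma card_of_PiE_ordLeq_PiE_bool:
  assumes "|R \<times> A| =o |B|"
  shows "|A \<rightarrow>\<^sub>E R| \<le>o |B \<rightarrow>\<^sub>E (UNIV :: bool set)|"
proof -
  have "|R| ^c |A| \<le>o (ctwo ^c |R| ) ^c |A|"
    by (rule cexp_mono1[OF ordLess_imp_ordLeq[OF ordLess_ctwo_cexp] card_of_Card_order])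
      (rule card_of_Card_order)
  also have "(ctwo ^c |R| ) ^c |A| =o ctwo ^c ( |R| *c |A| )"
    by (rule cexp_cprod[OF Card_order_ctwo])
  also have "ctwo ^c ( |R| *c |A| ) \<le>o ctwo ^c |B|"
  proof (rule cexp_mono2'[OF _ Card_order_ctwo])
    show "|R| *c |A| \<le>o |B|"
      using assms unfolding cprod_def Field_card_of by (rule ordIso_imp_ordLeq)
    show "Field |B| = {}" if "Field ( |R| *c |A| ) = {}"
      using that assms card_of_ordIso[of "R \<times> A" B]
      unfolding cprod_def Field_card_of bij_betw_def by auto
  qed
  finally show ?thesis by (simp add: card_of_PiE_eq_cexp ctwo_def)
qed

lemma card_of_PiE_ordLeq_extensions:
  assumes h: "inj_on h A" "h ` A \<subseteq> B - C" and C: "C \<subseteq> B"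
    and v: "v \<in> C \<rightarrow>\<^sub>E R" and r0: "r0 \<in> R"
  shows "|A \<rightarrow>\<^sub>E R| \<le>o |{s \<in> B \<rightarrow>\<^sub>E R. restrict s C = v}|"
proof -
  define e where "e u = (\<lambda>x\<in>B. if x \<in> C then v x
    else if x \<in> h ` A then u (inv_into A h x) else r0)" for u
  have e_h: "e u (h a) = u a" if "a \<in> A" for u a
    using that h unfolding e_def by auto
  have "inj_on e (A \<rightarrow>\<^sub>E R)"
  proof (rule inj_onI)
    fix u u' assume u: "u \<in> A \<rightarrow>\<^sub>E R" and u': "u' \<in> A \<rightarrow>\<^sub>E R" and "e u = e u'"
    then show "u = u'" using e_h by (intro PiE_ext[OF u u']) metis
  qed
  moreover have "e u \<in> {s \<in> B \<rightarrow>\<^sub>E R. restrict s C = v}" if u: "u \<in> A \<rightarrow>\<^sub>E R" for u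
  proof -
    have "e u \<in> B \<rightarrow>\<^sub>E R"
      using u v r0 inv_into_into[of _ h A] unfolding e_def by (auto simp: PiE_iff)
    moreover have "restrict (e u) C = v"
      using v C unfolding e_def by (auto simp: PiE_iff extensional_def fun_eq_iff)
    ultimately show ?thesis by blast
  qed
  ultimately show ?thesis by (rule card_of_ordLeqI)
qed

lemma card_of_Times_ordLess_infinite:
  assumes "infinite C" "|A| <o |C|" "|B| <o |C|"
  shows "|A \<times> B| <o |C|"
proof (cases "finite (A <+> B)")
  case True
  then have "finite (A \<times> B)" by simp
  then show ?thesis
    using assms(1) finite_ordLess_infinite[OF card_of_Well_order card_of_Well_order]
    by (simp add: Field_card_of)
next
  case False
  have "|A \<times> B| \<le>o |(A <+> B) \<times> B|"
    by (rule card_of_Times_mono1[OF card_of_Plus1])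
  also have "|(A <+> B) \<times> B| \<le>o |(A <+> B) \<times> (A <+> B)|"
    by (rule card_of_Times_mono2[OF card_of_Plus2])
  also have "|(A <+> B) \<times> (A <+> B)| =o |A <+> B|"
    using False by (rule card_of_Times_same_infinite)
  also have "|A <+> B| <o |C|"
    using assms by (rule card_of_Plus_ordLess_infinite)
  finally show ?thesis .
qed

section \<open>Initial segments of cardinal orders\<close>

lemma card_of_underS_ordLess_Field:
  assumes "Card_order r" "\<alpha> \<in> Field r"
  shows "|underS r \<alpha>| <o |Field r|"
  using card_of_underS[OF assms] ordIso_symmetric[OF card_of_Field_ordIso[OF assms(1)]]
  by (rule ordLess_ordIso_trans)

lemma ordLess_Field_imp_ordIso_underS:
  assumes r: "Card_order r" and X: "|X| <o |Field r|"
  obtains \<alpha> where "\<alpha> \<in> Field r" "|X| =o |underS r \<alpha>|"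
proof -
  have wo: "Well_order r" using r by (rule card_order_on_well_order_on)
  have "|X| <o r" using X card_of_Field_ordIso[OF r] by (rule ordLess_ordIso_trans)
  then obtain \<alpha> where \<alpha>: "\<alpha> \<in> Field r" "|X| =o Restr r (underS r \<alpha>)"
    using ordLess_iff_ordIso_Restr[OF wo card_of_Well_order] by blast
  have "Field (Restr r (underS r \<alpha>)) = underS r \<alpha>"
    using wo by (intro Field_Restr_ofilter wo_rel.underS_ofilter) (simp_all add: wo_rel_def)
  then have "|X| =o |underS r \<alpha>|"
    using card_of_cong[OF \<alpha>(2)] by (simp add: Field_card_of)
  with \<alpha>(1) show thesis by (rule that)
qed

lemma ordLess_Field_imp_ordLeq_PiE_underS:
  assumes r: "Card_order r" and R: "ctwo \<le>o |R|" and X: "|X| <o |Field r|"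
  obtains \<gamma> where "\<gamma> \<in> Field r" "|X| \<le>o |underS r \<gamma> \<rightarrow>\<^sub>E R|"
proof -
  obtain \<gamma> where \<gamma>: "\<gamma> \<in> Field r" "|X| =o |underS r \<gamma>|"
    using ordLess_Field_imp_ordIso_underS[OF r X] .
  have "|X| <o |underS r \<gamma> \<rightarrow>\<^sub>E R|"
    using \<gamma>(2) card_of_ordLess_PiE[OF R] by (rule ordIso_ordLess_trans)
  then show thesis by (rule that[OF \<gamma>(1) ordLess_imp_ordLeq])
qed

lemma card_of_Field_ordLeq_if_PiE_underS_ordLeq:
  assumes r: "Card_order r" and R: "ctwo \<le>o |R|"
    and C: "\<forall>\<alpha>\<in>Field r. |underS r \<alpha> \<rightarrow>\<^sub>E R| \<le>o |C|"
  shows "|Field r| \<le>o |C|"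
proof (rule ccontr)
  assume "\<not> |Field r| \<le>o |C|"
  then have "|C| <o |Field r|"
    by (simp add: not_ordLeq_iff_ordLess[OF card_of_Well_order card_of_Well_order])
  then obtain \<gamma> where \<gamma>: "\<gamma> \<in> Field r" "|C| =o |underS r \<gamma>|"
    using ordLess_Field_imp_ordIso_underS[OF r] by blast
  have "|underS r \<gamma>| <o |underS r \<gamma> \<rightarrow>\<^sub>E R|" by (rule card_of_ordLess_PiE[OF R])
  also have "|underS r \<gamma> \<rightarrow>\<^sub>E R| \<le>o |C|" using C \<gamma>(1) by blast
  also have "|C| =o |underS r \<gamma>|" by (rule \<gamma>(2))
  finally show False by (simp add: ordLess_irreflexive)
qed

lemma cofinal_Field:
  assumes "Card_order r" "infinite (Field r)"
  shows "cofinal (Field r) r"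
  unfolding cofinal_def
proof
  fix a assume a: "a \<in> Field r"
  interpret wo_rel r using assms(1) by (simp add: wo_rel_def card_order_on_well_order_on)
  obtain b where b: "b \<in> Field r" "(b, a) \<notin> r"
    using Card_order_infinite_not_under[OF assms] under_Field[of r a] unfolding under_def by blast
  then have "(a, b) \<in> r" using TOTALS a by blast
  moreover have "a \<noteq> b" using b a REFL unfolding refl_on_def by blast
  ultimately show "\<exists>b\<in>Field r. a \<noteq> b \<and> (a, b) \<in> r" using b(1) by blast
qed

lemma ordLeq_imp_ordLeq_PiE_underS:
  assumes r: "Card_order r" "infinite (Field r)" and X: "|X| \<le>o |R|"
  obtains \<gamma> where "\<gamma> \<in> Field r" "|X| \<le>o |underS r \<gamma> \<rightarrow>\<^sub>E R|"
proof -
  obtain a where a: "a \<in> Field r" using r(2) by (metis finite.emptyI ex_in_conv)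
  then obtain \<gamma> where \<gamma>: "\<gamma> \<in> Field r" "a \<in> underS r \<gamma>"
    using cofinal_Field[OF r] unfolding cofinal_def underS_def by blast
  have "inj_on (\<lambda>c. \<lambda>x\<in>underS r \<gamma>. c) R"
    using \<gamma>(2) by (auto simp: inj_on_def fun_eq_iff)
  then have "|R| \<le>o |underS r \<gamma> \<rightarrow>\<^sub>E R|" by (rule card_of_ordLeqI) auto
  then show thesis by (rule that[OF \<gamma>(1) ordLeq_transitive[OF X]])
qed

lemma ex_underS_PiE_ordLeq:
  assumes r: "Card_order r" "infinite (Field r)" and R: "ctwo \<le>o |R|"
    and X: "|X| <o |Field r| \<or> |X| \<le>o |R|"
  obtains \<gamma> where "\<gamma> \<in> Field r" "|X| \<le>o |underS r \<gamma> \<rightarrow>\<^sub>E R|"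
  using X
proof
  assume "|X| <o |Field r|"
  then show thesis by (rule ordLess_Field_imp_ordLeq_PiE_underS[OF r(1) R _ that])
next
  assume "|X| \<le>o |R|"
  then show thesis by (rule ordLeq_imp_ordLeq_PiE_underS[OF r _ that])
qed

lemma underS_mono_wo:
  assumes "Well_order r" "(\<alpha>, \<beta>) \<in> r"
  shows "underS r \<alpha> \<subseteq> underS r \<beta>"
  using assms(1)
  by (intro underS_incr[OF _ _ assms(2)] wo_rel.TRANS wo_rel.ANTISYM) (simp_all add: wo_rel_def)

lemma cofinal_ex_above:
  assumes wo: "Well_order r" and K: "cofinal K r" and a: "a \<in> Field r" and \<gamma>: "\<gamma> \<in> Field r"
  obtains i where "i \<in> K" "(a, i) \<in> r" "(\<gamma>, i) \<in> r"
proof -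
  interpret wo_rel r using wo by (simp add: wo_rel_def)
  let ?b = "max2 a \<gamma>"
  have b: "?b \<in> Field r" "(a, ?b) \<in> r" "(\<gamma>, ?b) \<in> r"
    using max2_greater_among[OF a \<gamma>] a \<gamma> by auto
  then obtain i where i: "i \<in> K" "(?b, i) \<in> r" using K unfolding cofinal_def by blast
  with b show thesis using TRANS unfolding trans_def by (blast intro: that)
qed

lemma card_of_Field_ordLeq_diff_underS:
  assumes r: "Card_order r" "infinite (Field r)" and \<gamma>: "\<gamma> \<in> Field r"
  shows "|Field r| \<le>o |Field r - underS r \<gamma>|"
proof (rule ccontr)
  assume "\<not> |Field r| \<le>o |Field r - underS r \<gamma>|"
  then have "|Field r - underS r \<gamma>| <o |Field r|"
    by (simp add: not_ordLeq_iff_ordLess[OF card_of_Well_order card_of_Well_order])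
  then have "|(Field r - underS r \<gamma>) \<union> underS r \<gamma>| <o |Field r|"
    by (rule card_of_Un_ordLess_infinite[OF r(2) _ card_of_underS_ordLess_Field[OF r(1) \<gamma>]])
  moreover have "(Field r - underS r \<gamma>) \<union> underS r \<gamma> = Field r"
    using Order_Relation.underS_Field[of r \<gamma>] by blast
  ultimately show False by (simp add: ordLess_irreflexive)
qed

lemma ex_underS_diff_ordLeq:
  assumes r: "Card_order r" "infinite (Field r)" and \<gamma>: "\<gamma> \<in> Field r" and \<alpha>: "\<alpha> \<in> Field r"
  obtains z where "z \<in> Field r" "|underS r \<alpha>| \<le>o |underS r z - underS r \<gamma>|"
proof -
  have wo: "Well_order r" using r(1) by (rule card_order_on_well_order_on)
  define W where "W = Restr r (Field r - underS r \<gamma>)"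
  have FW: "Field W = Field r - underS r \<gamma>"
    unfolding W_def using wo wo_rel.REFL Order_Relation.underS_Field[of r \<gamma>]
    by (intro Refl_Field_Restr2) (auto simp: wo_rel_def)
  \<comment> \<open>r embeds into its final segment W, which is just as large, and the embedding
    maps initial segments onto initial segments\<close>
  have "r =o |Field r|" using card_of_Field_ordIso[OF r(1)] by (rule ordIso_symmetric)
  also have "|Field r| \<le>o |Field W|" unfolding FW by (rule card_of_Field_ordLeq_diff_underS[OF r \<gamma>])
  also have "|Field W| \<le>o W" unfolding W_def by (rule card_of_least[OF Well_order_Restr[OF wo]])
  finally have "r \<le>o W" .
  then obtain f where f: "embed r W f" unfolding ordLeq_def by blast
  have fa: "f \<alpha> \<in> Field r" using embed_Field[OF f] \<alpha> FW by blast
  have "bij_betw f (underS r \<alpha>) (underS W (f \<alpha>))" by (rule embed_underS[OF wo f \<alpha>])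
  moreover have "underS W (f \<alpha>) \<subseteq> underS r (f \<alpha>) - underS r \<gamma>"
    unfolding W_def underS_def by auto
  ultimately have "|underS r \<alpha>| \<le>o |underS r (f \<alpha>) - underS r \<gamma>|"
    unfolding bij_betw_def by (intro card_of_ordLeqI[of f]) auto
  with fa show thesis by (rule that)
qed

section \<open>Bases, open partitions and the bounded topology\<close>

lemma is_base_topology_generated_by:
  assumes B: "\<And>U V x. U \<in> B \<Longrightarrow> V \<in> B \<Longrightarrow> x \<in> U \<inter> V \<Longrightarrow> \<exists>W\<in>B. x \<in> W \<and> W \<subseteq> U \<inter> V"
  shows "is_base (topology_generated_by B) B"
  unfolding is_base_def
proof (intro conjI allI impI ballI)
  fix U assume "U \<in> B"
  then show "openin (topology_generated_by B) U" by (rule topology_generated_by_Basis)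
next
  fix U assume "openin (topology_generated_by B) U"
  then have "generate_topology_on B U" by (rule openin_topology_generated_by)
  then have "\<forall>x\<in>U. \<exists>W\<in>B. x \<in> W \<and> W \<subseteq> U"
  proof (induction rule: generate_topology_on.induct)
    case Empty
    then show ?case by simp
  next
    case (Int U V)
    show ?case
    proof
      fix x assume "x \<in> U \<inter> V"
      then obtain U' V' where "U' \<in> B" "V' \<in> B" "x \<in> U' \<inter> V'" "U' \<subseteq> U" "V' \<subseteq> V"
        using Int.IH by blast
      then show "\<exists>W\<in>B. x \<in> W \<and> W \<subseteq> U \<inter> V" using B[of U' V' x] by blast
    qed
  next
    case (UN K)
    then show ?case by (meson UnionE Union_upper subset_trans)
  next
    case (Basis U)
    then show ?case by blast
  qed
  then show "\<exists>C\<subseteq>B. \<Union>C = U" by (intro exI[of _ "{W \<in> B. W \<subseteq> U}"]) blast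
qed

lemma open_partition_ordLeq_base:
  assumes B: "is_base T B" and P: "open_partition T P"
  shows "|P| \<le>o |B|"
proof -
  have ex: "\<forall>U\<in>P. \<exists>W. W \<in> B \<and> W \<noteq> {} \<and> W \<subseteq> U"
  proof
    fix U assume "U \<in> P"
    then have "openin T U" "U \<noteq> {}" using P unfolding open_partition_def by auto
    then obtain C where "C \<subseteq> B" "\<Union>C = U" using B unfolding is_base_def by blast
    with \<open>U \<noteq> {}\<close> show "\<exists>W. W \<in> B \<and> W \<noteq> {} \<and> W \<subseteq> U" by blast
  qed
  from bchoice[OF ex] obtain h where h: "\<forall>U\<in>P. h U \<in> B \<and> h U \<noteq> {} \<and> h U \<subseteq> U" ..
  have disjoint: "\<forall>U\<in>P. \<forall>V\<in>P. U \<noteq> V \<longrightarrow> U \<inter> V = {}"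
    using P by (simp add: open_partition_def)
  have "inj_on h P"
  proof (rule inj_onI)
    fix U V assume UV: "U \<in> P" "V \<in> P" "h U = h V"
    then have "h U \<subseteq> U \<inter> V" "h U \<noteq> {}" using h by auto
    then show "U = V" using disjoint UV(1,2) by blast
  qed
  then show ?thesis by (rule card_of_ordLeqI) (use h in blast)
qed

lemma is_weight_if_open_partition:
  assumes B: "is_base T B" and P: "open_partition T P" and BP: "|B| \<le>o |P|"
  shows "is_weight T P"
  unfolding is_weight_def
proof (intro conjI exI allI impI)
  show "is_base T B" by (rule B)
  show "|B| =o |P|" using BP open_partition_ordLeq_base[OF B P] by (simp add: ordIso_iff_ordLeq)
  show "|P| \<le>o |B'|" if "is_base T B'" for B' using open_partition_ordLeq_base[OF that P] .
qed

lemma bd_basic_cong: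
  assumes "g \<in> bd_basic r R \<alpha> f"
  shows "bd_basic r R \<alpha> g = bd_basic r R \<alpha> f"
  using assms unfolding bd_basic_def by auto

lemma self_in_bd_basic: "f \<in> fun_space r R \<Longrightarrow> f \<in> bd_basic r R \<alpha> f"
  unfolding bd_basic_def by simp

lemma bd_basic_antimono:
  assumes "Well_order r" "(\<alpha>, \<beta>) \<in> r"
  shows "bd_basic r R \<beta> f \<subseteq> bd_basic r R \<alpha> f"
  using underS_mono_wo[OF assms] unfolding bd_basic_def by blast

lemma bd_basic_in_bd_base:
  assumes "\<alpha> \<in> Field r" "f \<in> fun_space r R"
  shows "bd_basic r R \<alpha> f \<in> bd_base r R"
proof -
  have "bd_basic r R \<alpha> f = bd_basic r R \<alpha> (restrict f (underS r \<alpha>))"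
    unfolding bd_basic_def by auto
  moreover have "restrict f (underS r \<alpha>) \<in> underS r \<alpha> \<rightarrow>\<^sub>E R"
    using assms(2) Order_Relation.underS_Field[of r \<alpha>] unfolding fun_space_def by auto
  ultimately show ?thesis using assms(1) unfolding bd_base_def by blast
qed

lemma extend_in_bd_basic:
  assumes "s \<in> underS r \<alpha> \<rightarrow>\<^sub>E R" "r0 \<in> R"
  shows "(\<lambda>x\<in>Field r. if x \<in> underS r \<alpha> then s x else r0) \<in> bd_basic r R \<alpha> s"
  using assms Order_Relation.underS_Field[of r \<alpha>]
  unfolding bd_basic_def fun_space_def by (auto simp: PiE_iff)

lemma inj_on_bd_basic:
  assumes "r0 \<in> R"
  shows "inj_on (bd_basic r R \<alpha>) (underS r \<alpha> \<rightarrow>\<^sub>E R)"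
proof (rule inj_onI)
  fix s s' assume s: "s \<in> underS r \<alpha> \<rightarrow>\<^sub>E R" and s': "s' \<in> underS r \<alpha> \<rightarrow>\<^sub>E R"
    and eq: "bd_basic r R \<alpha> s = bd_basic r R \<alpha> s'"
  have ext: "(\<lambda>x\<in>Field r. if x \<in> underS r \<alpha> then s x else r0) \<in> bd_basic r R \<alpha> s'"
    using extend_in_bd_basic[OF s assms] eq by simp
  then show "s = s'"
  proof (rule_tac PiE_ext[OF s s'])
    fix \<beta> assume \<beta>: "\<beta> \<in> underS r \<alpha>"
    moreover have "\<beta> \<in> Field r" using \<beta> Order_Relation.underS_Field by fast
    ultimately show "s \<beta> = s' \<beta>" using ext unfolding bd_basic_def by auto
  qed
qed

lemma bd_base_is_base:
  assumes "Well_order r"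
  shows "is_base (bd_top r R) (bd_base r R)"
  unfolding bd_top_def
proof (rule is_base_topology_generated_by)
  fix U V f assume U: "U \<in> bd_base r R" and V: "V \<in> bd_base r R" and f: "f \<in> U \<inter> V"
  have through_f: "\<exists>\<alpha>\<in>Field r. W = bd_basic r R \<alpha> f" if W: "W \<in> bd_base r R" "f \<in> W" for W
  proof -
    obtain \<alpha> s where "\<alpha> \<in> Field r" "W = bd_basic r R \<alpha> s"
      using W(1) unfolding bd_base_def by blast
    then show ?thesis using bd_basic_cong[of f r R \<alpha> s] W(2) by auto
  qed
  obtain \<alpha> \<beta> where \<alpha>: "\<alpha> \<in> Field r" "U = bd_basic r R \<alpha> f"
    and \<beta>: "\<beta> \<in> Field r" "V = bd_basic r R \<beta> f"
    using through_f[OF U IntD1[OF f]] through_f[OF V IntD2[OF f]] by blast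
  have "(\<alpha>, \<beta>) \<in> r \<or> (\<beta>, \<alpha>) \<in> r"
    using wo_rel.TOTALS[of r] \<alpha>(1) \<beta>(1) assms unfolding wo_rel_def by blast
  then have "U \<subseteq> V \<or> V \<subseteq> U"
    unfolding \<alpha>(2) \<beta>(2) using bd_basic_antimono[OF assms] by blast
  with U V f show "\<exists>W\<in>bd_base r R. f \<in> W \<and> W \<subseteq> U \<inter> V" by blast
qed

lemma topspace_bd_top:
  assumes "Field r \<noteq> {}"
  shows "topspace (bd_top r R) = fun_space r R"
proof -
  obtain \<alpha> where \<alpha>: "\<alpha> \<in> Field r" using assms by blast
  have "fun_space r R \<subseteq> \<Union>(bd_base r R)"
  proof
    fix f assume f: "f \<in> fun_space r R"
    show "f \<in> \<Union>(bd_base r R)"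
      using self_in_bd_basic[OF f] bd_basic_in_bd_base[OF \<alpha> f] by blast
  qed
  moreover have "\<Union>(bd_base r R) \<subseteq> fun_space r R"
    unfolding bd_base_def bd_basic_def by auto
  ultimately show ?thesis unfolding bd_top_def by simp
qed

lemma card_of_bd_base_ordLeq:
  assumes r: "Card_order r" "infinite (Field r)" and R: "ctwo \<le>o |R|"
    and C: "\<forall>\<alpha>\<in>Field r. |underS r \<alpha> \<rightarrow>\<^sub>E R| \<le>o |C|"
  shows "|bd_base r R| \<le>o |C|"
proof -
  have Fr: "|Field r| \<le>o |C|" by (rule card_of_Field_ordLeq_if_PiE_underS_ordLeq[OF r(1) R C])
  have "bd_base r R = (\<Union>\<alpha>\<in>Field r. bd_basic r R \<alpha> ` (underS r \<alpha> \<rightarrow>\<^sub>E R))"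
    unfolding bd_base_def by blast
  moreover have "|\<Union>\<alpha>\<in>Field r. bd_basic r R \<alpha> ` (underS r \<alpha> \<rightarrow>\<^sub>E R)| \<le>o |C|"
  proof (rule card_of_UNION_ordLeq_infinite)
    show "infinite C" using card_of_ordLeq_infinite[OF Fr r(2)] .
    show "|Field r| \<le>o |C|" by (rule Fr)
    show "\<forall>\<alpha>\<in>Field r. |bd_basic r R \<alpha> ` (underS r \<alpha> \<rightarrow>\<^sub>E R)| \<le>o |C|"
      using C by (blast intro: ordLeq_transitive[OF card_of_image])
  qed
  ultimately show ?thesis by simp
qed

lemma bd_basic_subset_fun_space: "bd_basic r R \<alpha> s \<subseteq> fun_space r R"
  unfolding bd_basic_def by blast

section \<open>A large open partition\<close>

lemma open_partition_bd_top_stopping: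
  assumes r: "Field r \<noteq> {}" and \<tau>: "\<And>f. f \<in> fun_space r R \<Longrightarrow> \<tau> f \<in> Field r"
    and stop: "\<And>f g. f \<in> fun_space r R \<Longrightarrow> g \<in> bd_basic r R (\<tau> f) f \<Longrightarrow> \<tau> g = \<tau> f"
  shows "open_partition (bd_top r R) ((\<lambda>f. bd_basic r R (\<tau> f) f) ` fun_space r R)"
  unfolding open_partition_def
proof (intro conjI ballI)
  fix U assume "U \<in> (\<lambda>f. bd_basic r R (\<tau> f) f) ` fun_space r R"
  then obtain f where f: "f \<in> fun_space r R" "U = bd_basic r R (\<tau> f) f" by blast
  show "openin (bd_top r R) U"
    unfolding bd_top_def f(2) using bd_basic_in_bd_base[OF \<tau>[OF f(1)] f(1)]
    by (rule topology_generated_by_Basis)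
  show "U \<noteq> {}" unfolding f(2) using self_in_bd_basic[OF f(1)] by blast
next
  fix U V assume "U \<in> (\<lambda>f. bd_basic r R (\<tau> f) f) ` fun_space r R"
    "V \<in> (\<lambda>f. bd_basic r R (\<tau> f) f) ` fun_space r R"
  then obtain f g where f: "f \<in> fun_space r R" "U = bd_basic r R (\<tau> f) f"
    and g: "g \<in> fun_space r R" "V = bd_basic r R (\<tau> g) g" by blast
  have piece: "W = bd_basic r R (\<tau> h) h"
    if "h \<in> W" "W = bd_basic r R (\<tau> f) f" "f \<in> fun_space r R" for W f h
  proof -
    have h: "h \<in> bd_basic r R (\<tau> f) f" using that(1,2) by simp
    then have "\<tau> h = \<tau> f" by (rule stop[OF that(3)])
    with bd_basic_cong[OF h] that(2) show ?thesis by simp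
  qed
  have "U = V" if "h \<in> U" "h \<in> V" for h
    using piece[OF that(1) f(2,1)] piece[OF that(2) g(2,1)] by simp
  then show "U \<noteq> V \<longrightarrow> U \<inter> V = {}" by blast
next
  have "\<Union>((\<lambda>f. bd_basic r R (\<tau> f) f) ` fun_space r R) \<subseteq> fun_space r R"
    by (intro UN_least bd_basic_subset_fun_space)
  moreover have "fun_space r R \<subseteq> \<Union>((\<lambda>f. bd_basic r R (\<tau> f) f) ` fun_space r R)"
  proof
    fix f assume f: "f \<in> fun_space r R"
    show "f \<in> \<Union>((\<lambda>f. bd_basic r R (\<tau> f) f) ` fun_space r R)"
      by (rule UN_I[OF f]) (rule self_in_bd_basic[OF f])
  qed
  ultimately have "\<Union>((\<lambda>f. bd_basic r R (\<tau> f) f) ` fun_space r R) = fun_space r R" by blast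
  then show "\<Union>((\<lambda>f. bd_basic r R (\<tau> f) f) ` fun_space r R) = topspace (bd_top r R)"
    by (simp add: topspace_bd_top[OF r])
qed

lemma ex_level_PiE_ordLeq_extensions:
  assumes r: "Card_order r" "infinite (Field r)" and \<gamma>: "\<gamma> \<in> Field r" and \<alpha>: "\<alpha> \<in> Field r"
    and r0: "r0 \<in> R"
  obtains z where "z \<in> Field r" "\<forall>i. (z, i) \<in> r \<longrightarrow> (\<gamma>, i) \<in> r \<longrightarrow> (\<forall>v \<in> underS r \<gamma> \<rightarrow>\<^sub>E R.
    |underS r \<alpha> \<rightarrow>\<^sub>E R| \<le>o |{s \<in> underS r i \<rightarrow>\<^sub>E R. restrict s (underS r \<gamma>) = v}| )"
proof -
  have wo: "Well_order r" using r(1) by (rule card_order_on_well_order_on)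
  obtain z where z: "z \<in> Field r" "|underS r \<alpha>| \<le>o |underS r z - underS r \<gamma>|"
    using ex_underS_diff_ordLeq[OF r \<gamma> \<alpha>] .
  then obtain h where h: "inj_on h (underS r \<alpha>)" "h ` underS r \<alpha> \<subseteq> underS r z - underS r \<gamma>"
    unfolding card_of_ordLeq[symmetric] by blast
  have "|underS r \<alpha> \<rightarrow>\<^sub>E R| \<le>o |{s \<in> underS r i \<rightarrow>\<^sub>E R. restrict s (underS r \<gamma>) = v}|"
    if "(z, i) \<in> r" "(\<gamma>, i) \<in> r" "v \<in> underS r \<gamma> \<rightarrow>\<^sub>E R" for i v
  proof (rule card_of_PiE_ordLeq_extensions[OF h(1) _ _ that(3) r0])
    have "underS r z \<subseteq> underS r i" "underS r \<gamma> \<subseteq> underS r i"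
      using underS_mono_wo[OF wo] that(1,2) by blast+
    then show "h ` underS r \<alpha> \<subseteq> underS r i - underS r \<gamma>" "underS r \<gamma> \<subseteq> underS r i"
      using h(2) by blast+
  qed
  then have "\<forall>i. (z, i) \<in> r \<longrightarrow> (\<gamma>, i) \<in> r \<longrightarrow> (\<forall>v \<in> underS r \<gamma> \<rightarrow>\<^sub>E R.
    |underS r \<alpha> \<rightarrow>\<^sub>E R| \<le>o |{s \<in> underS r i \<rightarrow>\<^sub>E R. restrict s (underS r \<gamma>) = v}| )"
    by blast
  with z(1) show thesis by (rule that)
qed

text \<open>The map t codes levels i in I by functions on \<gamma>; f is cut at the level coded by its
  restriction to \<gamma>, and at \<gamma> itself if that restriction is not a code.\<close>

definition code_level :: "'a rel \<Rightarrow> 'a \<Rightarrow> 'a set \<Rightarrow> ('a \<Rightarrow> 'a \<Rightarrow> 'b) \<Rightarrow> ('a \<Rightarrow> 'b) \<Rightarrow> 'a" where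
  "code_level r \<gamma> I t f = (if restrict f (underS r \<gamma>) \<in> t ` I
     then inv_into I t (restrict f (underS r \<gamma>)) else \<gamma>)"

definition code_partition ::
    "'a rel \<Rightarrow> 'b set \<Rightarrow> 'a \<Rightarrow> 'a set \<Rightarrow> ('a \<Rightarrow> 'a \<Rightarrow> 'b) \<Rightarrow> ('a \<Rightarrow> 'b) set set" where
  "code_partition r R \<gamma> I t = (\<lambda>f. bd_basic r R (code_level r \<gamma> I t f) f) ` fun_space r R"

lemma code_level_above:
  assumes "Well_order r" "\<gamma> \<in> Field r" "\<forall>i\<in>I. (\<gamma>, i) \<in> r"
  shows "code_level r \<gamma> I t f \<in> Field r \<and> (\<gamma>, code_level r \<gamma> I t f) \<in> r"
proof -
  have "code_level r \<gamma> I t f \<in> I \<union> {\<gamma>}"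
    unfolding code_level_def using inv_into_into[of _ t I] by auto
  moreover have "(\<gamma>, \<gamma>) \<in> r"
    using wo_rel.REFL[of r] assms(1,2) unfolding wo_rel_def refl_on_def by blast
  then have "\<forall>x\<in>I \<union> {\<gamma>}. (\<gamma>, x) \<in> r" using assms(3) by blast
  ultimately have "(\<gamma>, code_level r \<gamma> I t f) \<in> r" by blast
  then show ?thesis by (simp add: FieldI2)
qed

lemma open_partition_code_partition:
  assumes wo: "Well_order r" and \<gamma>: "\<gamma> \<in> Field r" and I: "\<forall>i\<in>I. (\<gamma>, i) \<in> r"
  shows "open_partition (bd_top r R) (code_partition r R \<gamma> I t)"
  unfolding code_partition_def
proof (rule open_partition_bd_top_stopping)
  show "Field r \<noteq> {}" using \<gamma> by blast
  show "code_level r \<gamma> I t f \<in> Field r" for f using code_level_above[OF wo \<gamma> I] by blast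
  fix f g assume g: "g \<in> bd_basic r R (code_level r \<gamma> I t f) f"
  have "underS r \<gamma> \<subseteq> underS r (code_level r \<gamma> I t f)"
    by (rule underS_mono_wo[OF wo conjunct2[OF code_level_above[OF wo \<gamma> I]]])
  then have "restrict g (underS r \<gamma>) = restrict f (underS r \<gamma>)"
    using g by (intro restrict_ext) (auto simp: bd_basic_def)
  then show "code_level r \<gamma> I t g = code_level r \<gamma> I t f" unfolding code_level_def by simp
qed

lemma bd_basic_in_code_partition:
  assumes wo: "Well_order r" and i: "i \<in> I" "(\<gamma>, i) \<in> r" and t: "inj_on t I"
    and s: "s \<in> underS r i \<rightarrow>\<^sub>E R" "restrict s (underS r \<gamma>) = t i" and r0: "r0 \<in> R"
  shows "bd_basic r R i s \<in> code_partition r R \<gamma> I t"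
proof -
  define f where "f = (\<lambda>x\<in>Field r. if x \<in> underS r i then s x else r0)"
  have f: "f \<in> bd_basic r R i s" unfolding f_def using s(1) r0 by (rule extend_in_bd_basic)
  have "restrict f (underS r \<gamma>) = restrict s (underS r \<gamma>)"
    using f underS_mono_wo[OF wo i(2)] by (intro restrict_ext) (auto simp: bd_basic_def)
  then have "code_level r \<gamma> I t f = i" using s(2) i(1) t unfolding code_level_def by simp
  moreover have "f \<in> fun_space r R" using f by (simp add: bd_basic_def)
  ultimately show ?thesis
    unfolding code_partition_def
    by (rule_tac image_eqI[of _ _ f]) (simp_all add: bd_basic_cong[OF f])
qed

lemma bd_top_large_open_partition:
  assumes r: "Card_order r" "infinite (Field r)" and r0: "r0 \<in> R"
    and \<gamma>: "\<gamma> \<in> Field r" and K: "cofinal K r" "|K| \<le>o |underS r \<gamma> \<rightarrow>\<^sub>E R|"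
  obtains P where "open_partition (bd_top r R) P" "\<forall>\<alpha>\<in>Field r. |underS r \<alpha> \<rightarrow>\<^sub>E R| \<le>o |P|"
proof -
  have wo: "Well_order r" using r(1) by (rule card_order_on_well_order_on)
  define I where "I = {i \<in> K. (\<gamma>, i) \<in> r}"
  have I: "\<forall>i\<in>I. (\<gamma>, i) \<in> r" unfolding I_def by blast
  have "|I| \<le>o |underS r \<gamma> \<rightarrow>\<^sub>E R|"
    by (rule ordLeq_transitive[OF card_of_mono1 K(2)]) (auto simp: I_def)
  then obtain t where t: "inj_on t I" "t ` I \<subseteq> underS r \<gamma> \<rightarrow>\<^sub>E R"
    unfolding card_of_ordLeq[symmetric] by blast
  let ?P = "code_partition r R \<gamma> I t"
  have "\<forall>\<alpha>\<in>Field r. |underS r \<alpha> \<rightarrow>\<^sub>E R| \<le>o |?P|"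
  proof
    fix \<alpha> assume \<alpha>: "\<alpha> \<in> Field r"
    obtain z where z: "z \<in> Field r" and ext: "\<forall>i. (z, i) \<in> r \<longrightarrow> (\<gamma>, i) \<in> r \<longrightarrow>
      (\<forall>v \<in> underS r \<gamma> \<rightarrow>\<^sub>E R.
        |underS r \<alpha> \<rightarrow>\<^sub>E R| \<le>o |{s \<in> underS r i \<rightarrow>\<^sub>E R. restrict s (underS r \<gamma>) = v}| )"
      using ex_level_PiE_ordLeq_extensions[OF r \<gamma> \<alpha> r0] .
    obtain i where i: "i \<in> K" "(z, i) \<in> r" "(\<gamma>, i) \<in> r"
      using cofinal_ex_above[OF wo K(1) z \<gamma>] .
    then have iI: "i \<in> I" unfolding I_def by blast
    let ?S = "{s \<in> underS r i \<rightarrow>\<^sub>E R. restrict s (underS r \<gamma>) = t i}"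
    have "t i \<in> underS r \<gamma> \<rightarrow>\<^sub>E R" using t(2) iI by blast
    then have "|underS r \<alpha> \<rightarrow>\<^sub>E R| \<le>o |?S|" using ext i(2,3) by blast
    also have "|?S| \<le>o |?P|"
      using bd_basic_in_code_partition[OF wo iI i(3) t(1) _ _ r0]
      by (intro card_of_ordLeqI[OF inj_on_subset[OF inj_on_bd_basic[OF r0]]]) auto
    finally show "|underS r \<alpha> \<rightarrow>\<^sub>E R| \<le>o |?P|" .
  qed
  with open_partition_code_partition[OF wo \<gamma> I] show thesis by (rule that)
qed

section \<open>The weight\<close>

lemma weight_cexp_partition_if_open_partition:
  assumes r: "Card_order r" "infinite (Field r)" and R: "ctwo \<le>o |R|"
    and P: "open_partition (bd_top r R) P" "\<forall>\<alpha>\<in>Field r. |underS r \<alpha> \<rightarrow>\<^sub>E R| \<le>o |P|"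
    and R'_dom: "\<forall>\<alpha>\<in>Field r. \<exists>\<beta>\<in>Field r. |underS r \<alpha> \<rightarrow>\<^sub>E R| \<le>o |underS r \<beta> \<rightarrow>\<^sub>E R'|"
    and R_dom: "\<forall>\<beta>\<in>Field r. \<exists>\<alpha>\<in>Field r. |underS r \<beta> \<rightarrow>\<^sub>E R'| \<le>o |underS r \<alpha> \<rightarrow>\<^sub>E R|"
  shows "weight_cexp_partition (bd_top r R) R' r"
proof -
  have base: "is_base (bd_top r R) (bd_base r R)"
    using r(1) by (intro bd_base_is_base card_order_on_well_order_on)
  have bd_base_le: "|bd_base r R| \<le>o |C|" if "\<forall>\<alpha>\<in>Field r. |underS r \<alpha> \<rightarrow>\<^sub>E R| \<le>o |C|" for C :: "'x set"
    by (rule card_of_bd_base_ordLeq[OF r R that])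
  have "is_weight (bd_top r R) P"
    using is_weight_if_open_partition[OF base P(1) bd_base_le[OF P(2)]] .
  moreover have "is_cexp_less R' r P"
    unfolding is_cexp_less_def is_card_sup_def
  proof (intro conjI ballI allI impI)
    fix \<beta> assume "\<beta> \<in> Field r"
    then obtain \<alpha> where \<alpha>: "\<alpha> \<in> Field r" "|underS r \<beta> \<rightarrow>\<^sub>E R'| \<le>o |underS r \<alpha> \<rightarrow>\<^sub>E R|"
      using R_dom by blast
    show "|underS r \<beta> \<rightarrow>\<^sub>E R'| \<le>o |P|"
      using \<alpha>(2) P(2)[rule_format, OF \<alpha>(1)] by (rule ordLeq_transitive)
  next
    fix C :: "('a \<Rightarrow> 'c) set" assume C: "\<forall>\<beta>\<in>Field r. |underS r \<beta> \<rightarrow>\<^sub>E R'| \<le>o |C|"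
    have "|underS r \<alpha> \<rightarrow>\<^sub>E R| \<le>o |C|" if \<alpha>: "\<alpha> \<in> Field r" for \<alpha>
    proof -
      obtain \<beta> where \<beta>: "\<beta> \<in> Field r" "|underS r \<alpha> \<rightarrow>\<^sub>E R| \<le>o |underS r \<beta> \<rightarrow>\<^sub>E R'|"
        using R'_dom \<alpha> by blast
      show ?thesis using \<beta>(2) C[rule_format, OF \<beta>(1)] by (rule ordLeq_transitive)
    qed
    then have "|bd_base r R| \<le>o |C|" by (intro bd_base_le) blast
    then show "|P| \<le>o |C|" by (rule ordLeq_transitive[OF open_partition_ordLeq_base[OF base P(1)]])
  qed
  ultimately show ?thesis
    unfolding weight_cexp_partition_def using P(1) ordIso_refl[OF card_of_Card_order] by blast
qed

lemma weight_cexp_partition_bd_top: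
  assumes r: "Card_order r" "infinite (Field r)" and R: "ctwo \<le>o |R|"
    and K: "cofinal K r" "|K| <o |Field r| \<or> |K| \<le>o |R|"
  shows "weight_cexp_partition (bd_top r R) R r"
proof -
  obtain r0 where r0: "r0 \<in> R" using ctwo_ordLeq_imp_nonempty[OF R] by blast
  obtain \<gamma> where \<gamma>: "\<gamma> \<in> Field r" "|K| \<le>o |underS r \<gamma> \<rightarrow>\<^sub>E R|"
    using ex_underS_PiE_ordLeq[OF r R K(2)] .
  obtain P where P: "open_partition (bd_top r R) P" "\<forall>\<alpha>\<in>Field r. |underS r \<alpha> \<rightarrow>\<^sub>E R| \<le>o |P|"
    using bd_top_large_open_partition[OF r r0 \<gamma>(1) K(1) \<gamma>(2)] .
  have dom: "\<forall>\<alpha>\<in>Field r. \<exists>\<beta>\<in>Field r. |underS r \<alpha> \<rightarrow>\<^sub>E R| \<le>o |underS r \<beta> \<rightarrow>\<^sub>E R|"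
    using ordLeq_refl[OF card_of_Card_order] by blast
  show ?thesis by (rule weight_cexp_partition_if_open_partition[OF r R P dom dom])
qed

lemma weight_cexp_partition_bd_top_bool:
  assumes r: "Card_order r" "infinite (Field r)" and R: "ctwo \<le>o |R|" "|R| <o |Field r|"
    and K: "cofinal K r" "|K| <o |Field r|"
  shows "weight_cexp_partition (bd_top r R) (UNIV :: bool set) r"
proof -
  obtain r0 where r0: "r0 \<in> R" using ctwo_ordLeq_imp_nonempty[OF R(1)] by blast
  obtain \<gamma> where \<gamma>: "\<gamma> \<in> Field r" "|K| \<le>o |underS r \<gamma> \<rightarrow>\<^sub>E R|"
    using ordLess_Field_imp_ordLeq_PiE_underS[OF r(1) R(1) K(2)] .
  obtain P where P: "open_partition (bd_top r R) P" "\<forall>\<alpha>\<in>Field r. |underS r \<alpha> \<rightarrow>\<^sub>E R| \<le>o |P|"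
    using bd_top_large_open_partition[OF r r0 \<gamma>(1) K(1) \<gamma>(2)] .
  have "\<forall>\<alpha>\<in>Field r. \<exists>\<beta>\<in>Field r. |underS r \<alpha> \<rightarrow>\<^sub>E R| \<le>o |underS r \<beta> \<rightarrow>\<^sub>E (UNIV :: bool set)|"
  proof
    fix \<alpha> assume \<alpha>: "\<alpha> \<in> Field r"
    have small: "|R \<times> underS r \<alpha>| <o |Field r|"
      using card_of_Times_ordLess_infinite[OF r(2) R(2) card_of_underS_ordLess_Field[OF r(1) \<alpha>]] .
    obtain \<beta> where \<beta>: "\<beta> \<in> Field r" "|R \<times> underS r \<alpha>| =o |underS r \<beta>|"
      using ordLess_Field_imp_ordIso_underS[OF r(1) small] .
    show "\<exists>\<beta>\<in>Field r. |underS r \<alpha> \<rightarrow>\<^sub>E R| \<le>o |underS r \<beta> \<rightarrow>\<^sub>E (UNIV :: bool set)|"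
      using \<beta>(1) card_of_PiE_ordLeq_PiE_bool[OF \<beta>(2)] by blast
  qed
  moreover have "\<forall>\<beta>\<in>Field r. \<exists>\<alpha>\<in>Field r. |underS r \<beta> \<rightarrow>\<^sub>E (UNIV :: bool set)| \<le>o |underS r \<alpha> \<rightarrow>\<^sub>E R|"
    using card_of_PiE_bool_ordLeq[OF R(1)] by blast
  ultimately show ?thesis by (rule weight_cexp_partition_if_open_partition[OF r R(1) P])
qed

theorem mainTheorem2:
  fixes k :: "'a rel" and m :: "'b rel"
  assumes "Cinfinite k" and "regularCard k"
    and "Cinfinite m" and "k <o m" and "cof_is m k"
  shows "weight_cexp_partition (bd_top k (Field m)) (Field m) k \<and>
     weight_cexp_partition (bd_top m (UNIV :: bool set)) (UNIV :: bool set) m \<and>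
     weight_cexp_partition (bd_top m (Field k)) (UNIV :: bool set) m \<and>
     weight_cexp_partition (bd_top m (Field m)) (Field m) m"
proof -
  have k: "Card_order k" "infinite (Field k)" and m: "Card_order m" "infinite (Field m)"
    using assms(1,3) by (auto simp: cinfinite_def)
  have kF: "k =o |Field k|" using card_of_Field_ordIso[OF k(1)] by (rule ordIso_symmetric)
  have mF: "m =o |Field m|" using card_of_Field_ordIso[OF m(1)] by (rule ordIso_symmetric)
  have two_k: "ctwo \<le>o |Field k|"
    using ctwo_ordLeq_Cinfinite[OF assms(1)] kF by (rule ordLeq_ordIso_trans)
  have two_m: "ctwo \<le>o |Field m|"
    using ctwo_ordLeq_Cinfinite[OF assms(3)] mF by (rule ordLeq_ordIso_trans)
  have two_bool: "ctwo \<le>o |UNIV :: bool set|"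
    unfolding ctwo_def by (rule ordLeq_refl[OF card_of_Card_order])
  have km: "|Field k| <o |Field m|"
    using ordLess_Field[OF assms(4)] mF by (rule ordLess_ordIso_trans)
  obtain K where K: "cofinal K m" "|K| =o k" using assms(5) unfolding cof_is_def by blast
  have K_small: "|K| <o |Field m|"
    using ordIso_ordLess_trans[OF K(2) assms(4)] mF by (rule ordLess_ordIso_trans)
  have mm: "|Field m| \<le>o |Field m|" by (rule ordLeq_refl[OF card_of_Card_order])
  show ?thesis
    using weight_cexp_partition_bd_top[OF k two_m cofinal_Field[OF k] disjI2[OF ordLess_imp_ordLeq[OF km]]]
      weight_cexp_partition_bd_top[OF m two_bool K(1) disjI1[OF K_small]]
      weight_cexp_partition_bd_top_bool[OF m two_k km K(1) K_small]
      weight_cexp_partition_bd_top[OF m two_m cofinal_Field[OF m] disjI2[OF mm]]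
    by blast
qed

end
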